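(* For each $\eta\in(0,\pi/3)$, the convex hull $\mathrm{co}(V)$ is a polygon, where $V=\{b_0\}\cup\{z_k:k\ge0\}\cup\{w_k:k\ge1\}$.
   Context: For $\eta\in(0,\pi/3)$ let $a=\frac{e^{-i\eta}}{2\cos\eta}$, $c=\frac{1}{1-|a|^4}$, and for integers $k\ge0$ put $z_k=ca^{k+1}$, $w_k=1-c|a|^2a^k$, $b_k=a+c|a|^4a^k$. *)

theory Defs
  imports "HOL-Analysis.Analysis"
begin

definition aa :: "real \<Rightarrow> complex" where
  "aa \<eta> = cis (- \<eta>) / (2 * of_real (cos \<eta>))"

definition cc :: "real \<Rightarrow> real" where
  "cc \<eta> = 1 / (1 - norm (aa \<eta>) ^ 4)"

definition zz :: "real \<Rightarrow> nat \<Rightarrow> complex" where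
  "zz \<eta> k = of_real (cc \<eta>) * aa \<eta> ^ (k + 1)"

definition ww :: "real \<Rightarrow> nat \<Rightarrow> complex" where
  "ww \<eta> k = 1 - of_real (cc \<eta> * norm (aa \<eta>) ^ 2) * aa \<eta> ^ k"

definition bb :: "real \<Rightarrow> nat \<Rightarrow> complex" where
  "bb \<eta> k = aa \<eta> + of_real (cc \<eta> * norm (aa \<eta>) ^ 4) * aa \<eta> ^ k"

definition VV :: "real \<Rightarrow> complex set" where
  "VV \<eta> = {bb \<eta> 0} \<union> {zz \<eta> k | k. True} \<union> {ww \<eta> k | k. k \<ge> 1}"

end

theory Submission
  imports Defs
begin

text \<open>The points \<open>z\<^sub>k\<close> and \<open>w\<^sub>k\<close> lie on two logarithmic spirals
  \<open>q + \<beta> a\<^sup>k\<close> (around \<open>q = 0\<close> and \<open>q = 1\<close>) with \<open>a = |a| cis (-\<eta>)\<close> and \<open>|a| < 1\<close>.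
  Since the argument advances by \<open>\<eta>\<close> at each step, every direction \<open>u\<close> is met within
  \<open>N \<approx> 8\<pi>/(3\<eta>)\<close> steps by a point making an angle of at most \<open>\<pi>/3\<close> with \<open>u\<close>.  Hence the
  support function of the first \<open>N + 1\<close> points about \<open>q\<close> is bounded below by
  \<open>|\<beta>| |a|\<^sup>N / 2\<close>, so their convex hull contains a disc around \<open>q\<close>; the geometrically
  shrinking tail of the spiral falls into that disc.  Thus finitely many points of \<open>V\<close>
  already generate \<open>co(V)\<close>.\<close>

lemma cball_subset_convex_hull_if_support_ge:
  fixes S :: "'a::euclidean_space set"
  assumes "finite S"
    and support: "\<And>u. u \<noteq> 0 \<Longrightarrow> \<exists>x\<in>S. inner u (x - q) \<ge> \<rho> * norm u"
  shows "cball q \<rho> \<subseteq> convex hull S"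
proof
  fix p assume "p \<in> cball q \<rho>"
  then have dist_pq: "norm (p - q) \<le> \<rho>"
    by (simp add: dist_norm norm_minus_commute)
  show "p \<in> convex hull S"
  proof (rule ccontr)
    assume "p \<notin> convex hull S"
    moreover have "closed (convex hull S)"
      using \<open>finite S\<close> by (simp add: finite_imp_compact_convex_hull compact_imp_closed)
    ultimately obtain a b where ab: "inner a p < b" "\<And>x. x \<in> convex hull S \<Longrightarrow> inner a x > b"
      using separating_hyperplane_closed_point[OF convex_convex_hull] by blast
    obtain e :: 'a where "e \<in> Basis" using nonempty_Basis by blast
    then obtain x0 where "x0 \<in> S"
      using support[of e] nonzero_Basis by blast
    then have "a \<noteq> 0"
      using ab hull_inc[of x0 S] by fastforce
    then obtain x where x: "x \<in> S" "inner (-a) (x - q) \<ge> \<rho> * norm a"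
      using support[of "-a"] by auto
    have "inner (-a) (x - q) < inner (-a) (p - q)"
      using ab(1) ab(2)[OF hull_inc[OF \<open>x \<in> S\<close>]] by (simp add: inner_diff_right)
    also have "\<dots> \<le> norm a * norm (p - q)"
      using norm_cauchy_schwarz[of "-a" "p - q"] by simp
    also have "\<dots> \<le> norm a * \<rho>"
      using dist_pq by (simp add: mult_left_mono)
    finally show False
      using x(2) by (simp add: mult.commute)
  qed
qed

lemma polytope_convex_hull_if_finite_generators:
  assumes "finite F" "F \<subseteq> S" "S \<subseteq> convex hull F"
  shows "polytope (convex hull S)"
proof -
  have "convex hull S = convex hull F"
    using assms(2,3) by (metis convex_convex_hull hull_minimal hull_mono subset_antisym)
  then show ?thesis
    using \<open>finite F\<close> by (simp add: polytope_convex_hull)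
qed

lemma exists_multiple_cos_ge_half:
  assumes "0 < \<eta>" "\<eta> \<le> 2 * pi / 3" "- pi < \<phi>" "\<phi> \<le> pi"
  shows "\<exists>j \<le> nat \<lceil>(8 * pi / 3) / \<eta>\<rceil>. cos (\<phi> + real j * \<eta>) \<ge> 1 / 2"
proof -
  define t where "t = (5 * pi / 3 - \<phi>) / \<eta>"
  define j where "j = nat \<lceil>t\<rceil>"
  have "t > 0"
    unfolding t_def using assms by simp
  then have j: "t \<le> real j" "real j < t + 1"
    unfolding j_def by linarith+
  have "t \<le> (8 * pi / 3) / \<eta>"
    unfolding t_def using assms by (intro divide_right_mono) auto
  then have j_le: "j \<le> nat \<lceil>(8 * pi / 3) / \<eta>\<rceil>"
    unfolding j_def by (intro nat_mono ceiling_mono)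
  \<comment> \<open>The first multiple reaching \<open>5\<pi>/3\<close> overshoots by less than \<open>\<eta> \<le> 2\<pi>/3\<close>,
    so it lands within \<open>\<pi>/3\<close> of \<open>2\<pi>\<close>.\<close>
  define \<theta> where "\<theta> = \<phi> + real j * \<eta> - 2 * pi"
  have "t * \<eta> = 5 * pi / 3 - \<phi>"
    unfolding t_def using assms by simp
  moreover have "t * \<eta> \<le> real j * \<eta>"
    using j(1) assms(1) by (simp add: mult_right_mono)
  moreover have "real j * \<eta> < t * \<eta> + \<eta>"
    using mult_strict_right_mono[OF j(2) assms(1)] by (simp add: distrib_right)
  ultimately have "\<bar>\<theta>\<bar> \<le> pi / 3"
    unfolding \<theta>_def abs_le_iff using assms by linarith
  then have "cos (pi / 3) \<le> cos \<bar>\<theta>\<bar>"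
    by (intro cos_monotone_0_pi_le) auto
  also have "cos \<bar>\<theta>\<bar> = cos (\<phi> + real j * \<eta>)"
    unfolding \<theta>_def by (simp add: cos_abs_real cos_diff)
  finally show ?thesis
    using j_le by (auto simp: cos_60)
qed

lemma inner_complex_eq_Re_cnj: "inner u (x :: complex) = Re (cnj u * x)"
  by (simp add: inner_complex_def)

lemma cball_subset_convex_hull_spiral:
  fixes a \<beta> q :: complex
  assumes "0 < \<eta>" "\<eta> \<le> 2 * pi / 3" and a: "a = of_real r * cis (- \<eta>)" and "0 \<le> r" "r \<le> 1"
  defines "N \<equiv> nat \<lceil>(8 * pi / 3) / \<eta>\<rceil>"
  shows "cball q (norm \<beta> * r ^ N / 2) \<subseteq> convex hull ((\<lambda>k. q + \<beta> * a ^ k) ` {..N})"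
proof (rule cball_subset_convex_hull_if_support_ge)
  fix u :: complex
  define v where "v = u * cnj \<beta>"
  obtain j where "j \<le> N" and cos_ge: "cos (Arg v + real j * \<eta>) \<ge> 1 / 2"
    using exists_multiple_cos_ge_half[OF assms(1,2)] mpi_less_Arg Arg_le_pi
    unfolding N_def by blast
  define \<psi> where "\<psi> = Arg v + real j * \<eta>"
  have "cnj u * \<beta> = of_real (norm v) * cis (- Arg v)"
    unfolding v_def
    by (metis cis_cnj complex_cnj_cnj complex_cnj_mult complex_cnj_complex_of_real rcis_cmod_Arg rcis_def)
  moreover have "a ^ j = of_real (r ^ j) * cis (- (real j * \<eta>))"
    unfolding a by (simp add: power_mult_distrib Complex.DeMoivre)
  ultimately have "cnj u * (\<beta> * a ^ j) = of_real (norm v * r ^ j) * (cis (- Arg v) * cis (- (real j * \<eta>)))"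
    by (simp add: mult_ac)
  also have "\<dots> = of_real (norm v * r ^ j) * cis (- \<psi>)"
    unfolding \<psi>_def by (simp add: cis_mult)
  finally have rotated: "cnj u * (\<beta> * a ^ j) = of_real (norm v * r ^ j) * cis (- \<psi>)" .
  have "inner u (q + \<beta> * a ^ j - q) = Re (cnj u * (\<beta> * a ^ j))"
    by (simp add: inner_complex_eq_Re_cnj)
  also have "\<dots> = norm v * r ^ j * cos \<psi>"
    unfolding rotated by simp
  also have "\<dots> \<ge> norm v * r ^ N / 2"
  proof -
    have "r ^ N \<le> r ^ j"
      using \<open>j \<le> N\<close> assms(4,5) by (rule power_decreasing)
    then have "norm v * r ^ N * (1 / 2) \<le> norm v * r ^ j * cos \<psi>"
      using cos_ge assms(4) unfolding \<psi>_def by (intro mult_mono mult_left_mono) auto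
    then show ?thesis
      by simp
  qed
  finally show "\<exists>x\<in>(\<lambda>k. q + \<beta> * a ^ k) ` {..N}. inner u (x - q) \<ge> norm \<beta> * r ^ N / 2 * norm u"
    using \<open>j \<le> N\<close> unfolding v_def by (auto simp: norm_mult mult_ac)
qed simp

lemma spiral_subset_convex_hull_initial_segment:
  fixes a \<beta> q :: complex
  assumes "0 < \<eta>" "\<eta> \<le> 2 * pi / 3" and a: "a = of_real r * cis (- \<eta>)" and "0 \<le> r" "r < 1"
  obtains K where "range (\<lambda>k. q + \<beta> * a ^ k) \<subseteq> convex hull ((\<lambda>k. q + \<beta> * a ^ k) ` {..K})"
proof -
  define N where "N = nat \<lceil>(8 * pi / 3) / \<eta>\<rceil>"
  obtain M where M: "r ^ M < 1 / 2"
    using real_arch_pow_inv[of "1 / 2" r] \<open>r < 1\<close> by auto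
  let ?p = "\<lambda>k. q + \<beta> * a ^ k"
  have "?p k \<in> convex hull (?p ` {..N + M})" for k
  proof (cases "k \<le> N + M")
    case True
    then show ?thesis
      by (intro hull_inc) auto
  next
    case False
    have "dist q (?p k) = norm \<beta> * r ^ k"
      using \<open>0 \<le> r\<close> by (simp add: a dist_norm norm_mult norm_power)
    also have "\<dots> \<le> norm \<beta> * (r ^ N * r ^ M)"
      using False assms(4,5) by (simp add: mult_left_mono power_decreasing flip: power_add)
    also have "\<dots> \<le> norm \<beta> * (r ^ N * (1 / 2))"
      using M assms(4) by (intro mult_left_mono) auto
    finally have "?p k \<in> cball q (norm \<beta> * r ^ N / 2)"
      by simp
    also have "\<dots> \<subseteq> convex hull (?p ` {..N})"
      unfolding N_def using assms by (intro cball_subset_convex_hull_spiral) auto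
    also have "\<dots> \<subseteq> convex hull (?p ` {..N + M})"
      by (intro hull_mono image_mono) auto
    finally show ?thesis .
  qed
  then show thesis
    by (intro that[of "N + M"]) blast
qed

lemma aa_polar:
  assumes "cos \<eta> > 0"
  shows "aa \<eta> = of_real (norm (aa \<eta>)) * cis (- \<eta>)"
    and "norm (aa \<eta>) = 1 / (2 * cos \<eta>)"
proof -
  show norm_aa: "norm (aa \<eta>) = 1 / (2 * cos \<eta>)"
    using assms by (simp add: aa_def norm_divide)
  show "aa \<eta> = of_real (norm (aa \<eta>)) * cis (- \<eta>)"
    unfolding norm_aa by (simp add: aa_def)
qed

lemma cos_gt_half:
  assumes "\<bar>\<eta>\<bar> < pi / 3"
  shows "cos \<eta> > 1 / 2"
proof -
  have "cos (pi / 3) < cos \<bar>\<eta>\<bar>"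
    using assms by (intro cos_monotone_0_pi) auto
  then show ?thesis
    by (simp add: cos_60)
qed

lemma norm_aa_less_1:
  assumes "cos \<eta> > 1 / 2"
  shows "norm (aa \<eta>) < 1"
  using assms by (simp add: aa_polar(2))

theorem lemma3p1:
  fixes \<eta> :: real
  assumes "0 < \<eta>" and "\<eta> < pi / 3"
  shows "polytope (convex hull (VV \<eta>))"
proof -
  define a r c where "a = aa \<eta>" and "r = norm (aa \<eta>)" and "c = cc \<eta>"
  have "cos \<eta> > 1 / 2"
    using assms by (intro cos_gt_half) auto
  then have spiral: "0 < \<eta>" "\<eta> \<le> 2 * pi / 3" "a = of_real r * cis (- \<eta>)" "0 \<le> r" "r < 1"
    using assms aa_polar(1)[of \<eta>] norm_aa_less_1 unfolding a_def r_def by auto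
  have z: "zz \<eta> k = 0 + (of_real c * a) * a ^ k" for k
    by (simp add: zz_def a_def c_def)
  have w: "ww \<eta> (Suc k) = 1 + (- of_real (c * r\<^sup>2) * a) * a ^ k" for k
    by (simp add: ww_def a_def r_def c_def)
  obtain Kz where Kz: "range (zz \<eta>) \<subseteq> convex hull (zz \<eta> ` {..Kz})"
    using spiral_subset_convex_hull_initial_segment[OF spiral, of 0 "of_real c * a"]
    unfolding z[symmetric] by blast
  obtain Kw where Kw: "range (ww \<eta> \<circ> Suc) \<subseteq> convex hull ((ww \<eta> \<circ> Suc) ` {..Kw})"
    using spiral_subset_convex_hull_initial_segment[OF spiral, of 1 "- of_real (c * r\<^sup>2) * a"]
    unfolding comp_def w[symmetric] by blast
  define F where "F = insert (bb \<eta> 0) (zz \<eta> ` {..Kz} \<union> ww \<eta> ` Suc ` {..Kw})"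
  have "zz \<eta> ` {..Kz} \<subseteq> F" "ww \<eta> ` Suc ` {..Kw} \<subseteq> F"
    by (auto simp: F_def)
  then have hulls: "range (zz \<eta>) \<subseteq> convex hull F" "range (ww \<eta> \<circ> Suc) \<subseteq> convex hull F"
    using Kz Kw by (metis hull_mono image_comp subset_trans)+
  have "VV \<eta> \<subseteq> convex hull F"
  proof -
    have "ww \<eta> k \<in> range (ww \<eta> \<circ> Suc)" if "k \<ge> 1" for k
      using that by (auto intro!: image_eqI[of _ _ "k - 1"])
    moreover have "bb \<eta> 0 \<in> convex hull F"
      by (simp add: F_def hull_inc)
    ultimately show ?thesis
      using hulls unfolding VV_def by blast
  qed
  moreover have "finite F" "F \<subseteq> VV \<eta>"
    by (auto simp: F_def VV_def)
  ultimately show ?thesis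
    by (simp add: polytope_convex_hull_if_finite_generators)
qed

end
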